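(* Let $d\geq 0$ and $0<i\leq d+1$ be integers, and write $d+1=qi+r$ with integers $q\geq 0$, $1\leq r\leq i$. Let $\Delta\in\mathcal{C}(i,d)$. Then $f_j(\Delta)\geq f_j(S(i,d))$ for every $1\leq j\leq r$.
   Context: All simplicial complexes are finite abstract simplicial complexes; $f_j(\Delta)$ denotes the number of $j$-dimensional faces of $\Delta$. A set $F$ of vertices is a missing face of $\Delta$ if $F\notin\Delta$ but every proper subset of $F$ is in $\Delta$; its dimension is $|F|-1$. $\mathcal{C}(i,d)$ denotes the family of $d$-dimensional simplicial complexes $\Delta$ with $\tilde H_d(\Delta;\mathbb{Z})\neq 0$ (reduced homology) and with no missing faces of dimension $>i$. For integers $d\geq 0$, $i>0$ with $d+1=qi+r$ ($q\geq 0$, $1\leq r\leq i$), $S(i,d)$ is the simplicial join of $q$ copies of $\partial\sigma^i$ and one copy of $\partial\sigma^r$ on pairwise disjoint vertex sets, where $\partial\sigma^k$ is the boundary complex of the $k$-simplex. *)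

theory Defs
  imports Main
begin

text \<open>A complex is a finite, nonempty, downward closed family of finite vertex sets.
  Vertices come from a linearly ordered type; the order is only used to orient simplices.\<close>

definition simplicial_complex :: "'a set set \<Rightarrow> bool" where
  "simplicial_complex K \<longleftrightarrow> finite K \<and> K \<noteq> {} \<and> (\<forall>F\<in>K. finite F) \<and>
     (\<forall>F\<in>K. \<forall>G. G \<subseteq> F \<longrightarrow> G \<in> K)"

definition fvec :: "'a set set \<Rightarrow> nat \<Rightarrow> nat" where
  "fvec K j = card {F \<in> K. card F = j + 1}"

definition complex_dim :: "'a set set \<Rightarrow> nat \<Rightarrow> bool" where
  "complex_dim K d \<longleftrightarrow> (\<exists>F\<in>K. card F = d + 1) \<and> (\<forall>F\<in>K. card F \<le> d + 1)"

definition missing_face :: "'a set set \<Rightarrow> 'a set \<Rightarrow> bool" where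
  "missing_face K F \<longleftrightarrow> finite F \<and> F \<notin> K \<and> (\<forall>G. G \<subset> F \<longrightarrow> G \<in> K)"

text \<open>An integral k-chain: integer coefficients on the k-faces (oriented by the vertex order).\<close>
definition is_chain :: "'a set set \<Rightarrow> nat \<Rightarrow> ('a set \<Rightarrow> int) \<Rightarrow> bool" where
  "is_chain K k c \<longleftrightarrow> (\<forall>F. c F \<noteq> 0 \<longrightarrow> F \<in> K \<and> card F = k + 1)"

text \<open>Augmented simplicial boundary: removing the vertex in position p (counted from 0 in
  increasing order) contributes sign (-1)^p; the empty face is included (reduced homology).\<close>
definition bdry :: "'a::linorder set set \<Rightarrow> ('a set \<Rightarrow> int) \<Rightarrow> 'a set \<Rightarrow> int" where
  "bdry K c G = (\<Sum>F\<in>{F \<in> K. G \<subseteq> F \<and> card (F - G) = 1}.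
      (-1) ^ card {x \<in> G. x < the_elem (F - G)} * c F)"

definition reduced_homology_nonzero :: "'a::linorder set set \<Rightarrow> nat \<Rightarrow> bool" where
  "reduced_homology_nonzero K k \<longleftrightarrow>
     (\<exists>z. is_chain K k z \<and> (\<forall>G. bdry K z G = 0) \<and>
          \<not> (\<exists>b. is_chain K (k + 1) b \<and> bdry K b = z))"

definition class_C :: "nat \<Rightarrow> nat \<Rightarrow> 'a::linorder set set \<Rightarrow> bool" where
  "class_C i d K \<longleftrightarrow> simplicial_complex K \<and> complex_dim K d \<and>
     reduced_homology_nonzero K d \<and> (\<forall>F. missing_face K F \<longrightarrow> card F \<le> i + 1)"

definition bd_simplex :: "'a set \<Rightarrow> 'a set set" where
  "bd_simplex V = {F. F \<subseteq> V \<and> F \<noteq> V}"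

definition sjoin :: "'a set set \<Rightarrow> 'a set set \<Rightarrow> 'a set set" where
  "sjoin K L = {F \<union> G | F G. F \<in> K \<and> G \<in> L}"

text \<open>Vertex blocks: q blocks of size i+1 and one block of size r+1, pairwise disjoint,
  where d+1 = q*i + r with 1 \<le> r \<le> i, i.e. q = d div i, r = d mod i + 1.\<close>
definition S_blocks :: "nat \<Rightarrow> nat \<Rightarrow> nat set list" where
  "S_blocks i d = (let q = d div i; r = d mod i + 1 in
     map (\<lambda>m. {m * (i + 1) ..< (m + 1) * (i + 1)}) [0..<q] @
     [{q * (i + 1) ..< q * (i + 1) + r + 1}])"

definition S_complex :: "nat \<Rightarrow> nat \<Rightarrow> nat set set" where
  "S_complex i d = foldr (\<lambda>V K. sjoin (bd_simplex V) K) (S_blocks i d) {{}}"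

end

theory Submission
  imports Defs
begin

(* Write n = n(i,d) = d + d div i + 2 for the number of vertices of S(i,d), whose vertex set is
   split into blocks: d div i blocks of i + 1 vertices and one block of r + 1 = d mod i + 2.
   A complex in C(i,d) carries a nonzero d-cycle z.  We work with pairs (K, z) where K has
   dimension at most d and no missing face with more than i + 1 vertices, and z is a nonzero
   d-cycle (a "top cycle").  Such pairs are closed under links: the link of a face s in the
   star of z carries a transported cycle of dimension d - |s|.  By induction through links:
   (A) the support of z has at least n vertices;
   (B) for j \<le> d mod i, at least C(n, j+1) faces with j + 1 vertices lie on the support
       (double counting over vertex links);
   (C) for j = d mod i + 1 \<le> d, at most as many (j+1)-subsets of the support are non-faces as
       S(i,d) has blocks of that size: on a support of exactly n vertices the missing ones are
       pairwise disjoint, otherwise double counting leaves enough slack.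
   On the other side every face of S(i,d) is a subset of its n vertices containing no block,
   which gives the matching upper bounds for f_j(S(i,d)); the theorem combines the two. *)

section \<open>Simplicial complexes\<close>

lemma complex_downward: "simplicial_complex K \<Longrightarrow> F \<in> K \<Longrightarrow> G \<subseteq> F \<Longrightarrow> G \<in> K"
  unfolding simplicial_complex_def by blast

lemma complex_face_finite: "simplicial_complex K \<Longrightarrow> F \<in> K \<Longrightarrow> finite F"
  unfolding simplicial_complex_def by blast

lemma complex_finite: "simplicial_complex K \<Longrightarrow> finite K"
  unfolding simplicial_complex_def by blast

(* Every finite non-face contains a missing face: take a non-face inside it of least size. *)
lemma nonface_contains_missing_face:
  assumes "finite X" "X \<notin> K"
  obtains N where "N \<subseteq> X" "missing_face K N"
proof -
  obtain N where N: "N \<subseteq> X \<and> N \<notin> K"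
    and least: "\<And>Y. Y \<subseteq> X \<and> Y \<notin> K \<Longrightarrow> card N \<le> card Y"
    using ex_has_least_nat[of "\<lambda>N. N \<subseteq> X \<and> N \<notin> K" X card] assms(2) by blast
  have fin: "finite N" using N assms(1) finite_subset by blast
  have "Y \<in> K" if "Y \<subset> N" for Y
    using least[of Y] that N psubset_card_mono[OF fin that] by fastforce
  then show ?thesis using that N fin unfolding missing_face_def by blast
qed

section \<open>Orientation signs\<close>

(* Passing from a face G \<union> s to the face G of the link of s permutes the vertex order;
   the sign of that shuffle counts the pairs of s \<times> G that are out of order. *)
lemma neg_one_power_square: "(-1::int) ^ e * (-1) ^ e = 1"
  by (simp flip: power_add)

definition shuffle_sign :: "'a::linorder set \<Rightarrow> 'a set \<Rightarrow> int" where
  "shuffle_sign s G = (-1) ^ card {p \<in> s \<times> G. snd p < fst p}"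

lemma shuffle_sign_nonzero: "shuffle_sign s G \<noteq> 0"
  unfolding shuffle_sign_def by simp

lemma shuffle_sign_insert:
  assumes "finite s" "finite H" "x \<notin> H"
  shows "shuffle_sign s (insert x H) = shuffle_sign s H * (-1) ^ card {t \<in> s. x < t}"
proof -
  have split: "{p \<in> s \<times> insert x H. snd p < fst p}
      = {p \<in> s \<times> H. snd p < fst p} \<union> (\<lambda>t. (t, x)) ` {t \<in> s. x < t}"
    by auto
  have "card {p \<in> s \<times> insert x H. snd p < fst p}
      = card {p \<in> s \<times> H. snd p < fst p} + card {t \<in> s. x < t}"
    unfolding split using assms by (subst card_Un_disjoint) (auto simp: card_image inj_on_def)
  then show ?thesis unfolding shuffle_sign_def by (simp add: power_add)
qed

lemma card_less_greater:
  assumes "finite s" "x \<notin> s"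
  shows "card {t \<in> s. t < (x::'a::linorder)} + card {t \<in> s. x < t} = card s"
proof -
  have "s = {t \<in> s. t < x} \<union> {t \<in> s. x < t}" using assms(2) less_linear by blast
  then have "card s = card ({t \<in> s. t < x} \<union> {t \<in> s. x < t})" by simp
  also have "\<dots> = card {t \<in> s. t < x} + card {t \<in> s. x < t}"
    using assms(1) by (intro card_Un_disjoint) auto
  finally show ?thesis by simp
qed

lemma card_less_Un:
  assumes "finite s" "finite H" "H \<inter> s = {}"
  shows "card {y \<in> H \<union> s. y < (x::'a::linorder)} = card {y \<in> H. y < x} + card {y \<in> s. y < x}"
proof -
  have "{y \<in> H \<union> s. y < x} = {y \<in> H. y < x} \<union> {y \<in> s. y < x}" by auto
  then show ?thesis using assms by (simp add: card_Un_disjoint disjoint_iff)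
qed

section \<open>Links and link chains\<close>

definition link :: "'a set set \<Rightarrow> 'a set \<Rightarrow> 'a set set" where
  "link K s = {G. G \<inter> s = {} \<and> G \<union> s \<in> K}"

definition link_chain :: "'a::linorder set \<Rightarrow> ('a set \<Rightarrow> int) \<Rightarrow> 'a set \<Rightarrow> int" where
  "link_chain s z G = (if G \<inter> s = {} then shuffle_sign s G * z (G \<union> s) else 0)"

definition support :: "('a set \<Rightarrow> int) \<Rightarrow> 'a set" where
  "support z = \<Union>{F. z F \<noteq> 0}"

lemma support_iff: "x \<in> support z \<longleftrightarrow> (\<exists>F. z F \<noteq> 0 \<and> x \<in> F)"
  unfolding support_def by blast

lemma link_complex:
  assumes K: "simplicial_complex K" and s: "s \<in> K"
  shows "simplicial_complex (link K s)"
proof -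
  have "link K s \<subseteq> (\<lambda>F. F - s) ` K"
    unfolding link_def by (auto intro!: image_eqI[where x = "_ \<union> s"])
  then have "finite (link K s)" using complex_finite[OF K] finite_surj by blast
  moreover have "{} \<in> link K s" using s unfolding link_def by simp
  moreover have "finite F" if "F \<in> link K s" for F
    using that complex_face_finite[OF K] unfolding link_def by blast
  moreover have "G \<in> link K s" if "F \<in> link K s" "G \<subseteq> F" for F G
    using that complex_downward[OF K, of "F \<union> s" "G \<union> s"] unfolding link_def by blast
  ultimately show ?thesis unfolding simplicial_complex_def by blast
qed

lemma link_face_card:
  assumes K: "simplicial_complex K" and s: "finite s" and G: "G \<in> link K s"
  shows "card (G \<union> s) = card G + card s"
proof -
  have "G \<inter> s = {}" "G \<union> s \<in> K" using G unfolding link_def by auto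
  moreover have "finite G" using complex_face_finite[OF K \<open>G \<union> s \<in> K\<close>] by simp
  ultimately show ?thesis using s by (simp add: card_Un_disjoint)
qed

(* Links inherit the bound on the size of missing faces: a missing face M of the link either
   meets s (then it is a single vertex) or M \<union> s contains a missing face of K that contains M. *)
lemma link_missing_face_bound:
  assumes K: "simplicial_complex K" and s: "s \<in> K"
    and miss: "\<forall>F. missing_face K F \<longrightarrow> card F \<le> i + 1"
    and M: "missing_face (link K s) M"
  shows "card M \<le> i + 1"
proof (cases "M \<inter> s = {}")
  case False
  then obtain x where x: "x \<in> M" "x \<in> s" by blast
  have "{x} \<notin> link K s" using x unfolding link_def by auto
  then have "M = {x}" using M x unfolding missing_face_def by blast
  then show ?thesis by simp
next
  case True
  have fM: "finite M" using M unfolding missing_face_def by blast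
  have fs: "finite s" using complex_face_finite[OF K s] .
  have "M \<union> s \<notin> K" using True M unfolding missing_face_def link_def by blast
  then obtain N where N: "N \<subseteq> M \<union> s" "missing_face K N"
    using nonface_contains_missing_face[of "M \<union> s" K] fM fs by blast
  have "M \<subseteq> N"
  proof
    fix y assume y: "y \<in> M"
    show "y \<in> N"
    proof (rule ccontr)
      assume "y \<notin> N"
      then have "N \<subseteq> (M - {y}) \<union> s" using N(1) by blast
      moreover have "M - {y} \<in> link K s" using M y unfolding missing_face_def by blast
      ultimately have "N \<in> K" using complex_downward[OF K] unfolding link_def by blast
      then show False using N(2) unfolding missing_face_def by blast
    qed
  qed
  moreover have "finite N" and "card N \<le> i + 1" using N(2) miss unfolding missing_face_def by auto
  ultimately show ?thesis using card_mono le_trans by blast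
qed

lemma link_chain_nonzero: "link_chain s z G \<noteq> 0 \<longleftrightarrow> G \<inter> s = {} \<and> z (G \<union> s) \<noteq> 0"
  unfolding link_chain_def using shuffle_sign_nonzero by auto

lemma support_link_chain:
  "x \<in> support (link_chain s z) \<longleftrightarrow> x \<notin> s \<and> (\<exists>F. z F \<noteq> 0 \<and> s \<subseteq> F \<and> x \<in> F)"
proof
  assume "x \<in> support (link_chain s z)"
  then show "x \<notin> s \<and> (\<exists>F. z F \<noteq> 0 \<and> s \<subseteq> F \<and> x \<in> F)"
    unfolding support_iff link_chain_nonzero by blast
next
  assume "x \<notin> s \<and> (\<exists>F. z F \<noteq> 0 \<and> s \<subseteq> F \<and> x \<in> F)"
  then obtain F where F: "x \<notin> s" "z F \<noteq> 0" "s \<subseteq> F" "x \<in> F" by blast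
  then have "(F - s) \<inter> s = {}" "(F - s) \<union> s = F" by auto
  then have "link_chain s z (F - s) \<noteq> 0" unfolding link_chain_nonzero using F by simp
  then show "x \<in> support (link_chain s z)" unfolding support_iff using F by blast
qed

lemma support_link_chain_subset: "support (link_chain s z) \<subseteq> support z - s"
  using support_link_chain[of _ s z] support_iff[of _ z] by blast

lemma link_chain_is_chain:
  assumes K: "simplicial_complex K" and z: "is_chain K d z" and s: "s \<in> K" "card s \<le> d"
  shows "is_chain (link K s) (d - card s) (link_chain s z)"
  unfolding is_chain_def
proof (intro allI impI)
  fix G assume "link_chain s z G \<noteq> 0"
  then have G: "G \<inter> s = {}" "G \<union> s \<in> K" "card (G \<union> s) = d + 1"
    using z unfolding link_chain_nonzero is_chain_def by auto
  then have "G \<in> link K s" unfolding link_def by blast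
  moreover from this have "card G + card s = d + 1"
    using G(3) link_face_card[OF K complex_face_finite[OF K s(1)]] by simp
  ultimately show "G \<in> link K s \<and> card G = d - card s + 1" using s(2) by simp
qed

(* Sign bookkeeping behind the cycle property: the coefficient of the face insert x H in the
   boundary of the link chain is, up to the constant sign shuffle_sign s H * (-1)^|s|, the
   coefficient of insert x H \<union> s in the boundary of z. *)
lemma link_chain_boundary_term:
  assumes fs: "finite s" and fH: "finite H" and disj: "H \<inter> s = {}" and x: "x \<notin> H" "x \<notin> s"
  shows "(-1) ^ card {y \<in> H. y < x} * link_chain s z (insert x H)
       = shuffle_sign s H * (-1) ^ card s * ((-1) ^ card {y \<in> H \<union> s. y < x} * z (insert x H \<union> s))"
proof -
  define a where "a = card {y \<in> H. y < x}"
  define b where "b = card {t \<in> s. x < t}"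
  define e where "e = card {t \<in> s. t < x}"
  have cs: "card s = e + b" using card_less_greater[OF fs x(2)] unfolding e_def b_def by simp
  have cHs: "card {y \<in> H \<union> s. y < x} = a + e"
    unfolding a_def e_def using card_less_Un[OF fs fH disj] .
  have lc: "link_chain s z (insert x H) = shuffle_sign s H * (-1) ^ b * z (insert x H \<union> s)"
    unfolding link_chain_def b_def using disj x shuffle_sign_insert[OF fs fH x(1)] by simp
  have "(-1::int) ^ (e + b) * (-1) ^ (a + e) = (-1) ^ a * (-1) ^ b * ((-1) ^ e * (-1) ^ e)"
    by (simp add: power_add algebra_simps)
  then have "(-1::int) ^ (e + b) * (-1) ^ (a + e) = (-1) ^ a * (-1) ^ b"
    by (simp add: neg_one_power_square)
  then show ?thesis unfolding lc cs cHs a_def[symmetric] by (simp add: algebra_simps)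
qed

lemma link_cofaces_bij:
  assumes Hs: "H \<inter> s = {}"
  shows "bij_betw (\<lambda>F. F \<union> s) {F \<in> link K s. H \<subseteq> F \<and> card (F - H) = 1}
                                {F \<in> K. H \<union> s \<subseteq> F \<and> card (F - (H \<union> s)) = 1}"
    (is "bij_betw _ ?A ?B")
proof (rule bij_betw_byWitness[where f' = "\<lambda>F. F - s"])
  show "\<forall>F\<in>?A. F \<union> s - s = F" "\<forall>F\<in>?B. F - s \<union> s = F"
    unfolding link_def by auto
  show "(\<lambda>F. F \<union> s) ` ?A \<subseteq> ?B"
  proof
    fix G assume "G \<in> (\<lambda>F. F \<union> s) ` ?A"
    then obtain F where F: "F \<in> ?A" "G = F \<union> s" by blast
    then have "F \<inter> s = {}" "F \<union> s \<in> K" "H \<subseteq> F" "card (F - H) = 1"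
      unfolding link_def by auto
    moreover from this have "G - (H \<union> s) = F - H" using F(2) by auto
    ultimately show "G \<in> ?B" using F(2) by auto
  qed
  show "(\<lambda>F. F - s) ` ?B \<subseteq> ?A"
  proof
    fix G assume "G \<in> (\<lambda>F. F - s) ` ?B"
    then obtain F where F: "F \<in> ?B" "G = F - s" by blast
    then have "F \<in> K" "H \<union> s \<subseteq> F" "card (F - (H \<union> s)) = 1" by auto
    moreover from this have "G \<union> s = F" "G - H = F - (H \<union> s)" using F(2) by auto
    ultimately show "G \<in> ?A" unfolding link_def using F(2) Hs by auto
  qed
qed

(* Links of cycles are cycles: the boundary of the link chain at H is a signed multiple of the
   boundary of z at H \<union> s. *)
lemma link_chain_cycle:
  assumes K: "simplicial_complex K" and cyc: "\<forall>G. bdry K z G = 0" and s: "s \<in> K"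
  shows "bdry (link K s) (link_chain s z) H = 0"
proof (cases "H \<inter> s = {}")
  case False
  then have none: "{F \<in> link K s. H \<subseteq> F \<and> card (F - H) = 1} = {}" unfolding link_def by auto
  show ?thesis unfolding bdry_def none by simp
next
  case True
  have fs: "finite s" using complex_face_finite[OF K s] .
  define A where "A = {F \<in> link K s. H \<subseteq> F \<and> card (F - H) = 1}"
  define B where "B = {F \<in> K. H \<union> s \<subseteq> F \<and> card (F - (H \<union> s)) = 1}"
  define summand where "summand F = (-1) ^ card {x \<in> H \<union> s. x < the_elem (F - (H \<union> s))} * z F" for F
  define c where "c = shuffle_sign s H * (-1) ^ card s"
  have bij: "bij_betw (\<lambda>F. F \<union> s) A B"
    unfolding A_def B_def using link_cofaces_bij[OF True] .
  have link_summand: "(-1) ^ card {x \<in> H. x < the_elem (F - H)} * link_chain s z F = c * summand (F \<union> s)"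
    if F: "F \<in> A" for F
  proof -
    have F1: "F \<inter> s = {}" "F \<union> s \<in> K" "H \<subseteq> F" "card (F - H) = 1"
      using F unfolding A_def link_def by auto
    then obtain x where x: "F - H = {x}" using card_1_singletonE by blast
    have fH: "finite H" using complex_face_finite[OF K F1(2)] F1(3) finite_subset by blast
    have F_eq: "F = insert x H" and xs: "x \<notin> H" "x \<notin> s" and Hs: "F \<union> s - (H \<union> s) = {x}"
      using x F1 by auto
    have "summand (F \<union> s) = (-1) ^ card {y \<in> H \<union> s. y < x} * z (F \<union> s)"
      unfolding summand_def Hs by simp
    then show ?thesis using link_chain_boundary_term[OF fs fH True xs, of z]
      unfolding c_def x F_eq[symmetric] by simp
  qed
  have "bdry (link K s) (link_chain s z) H = (\<Sum>F\<in>A. c * summand (F \<union> s))"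
    unfolding bdry_def A_def[symmetric] using link_summand by (simp add: A_def)
  also have "\<dots> = c * (\<Sum>F\<in>B. summand F)"
    by (simp add: sum_distrib_left[symmetric] sum.reindex_bij_betw[OF bij])
  also have "(\<Sum>F\<in>B. summand F) = bdry K z (H \<union> s)"
    unfolding bdry_def B_def summand_def by simp
  finally show ?thesis using cyc by simp
qed

section \<open>Top-dimensional cycles\<close>

(* The invariant carried through the induction: K has dimension at most d, no missing face has
   more than i + 1 vertices, and z is a nonzero d-cycle of K. *)
definition top_cycle :: "nat \<Rightarrow> nat \<Rightarrow> 'a::linorder set set \<Rightarrow> ('a set \<Rightarrow> int) \<Rightarrow> bool" where
  "top_cycle i d K z \<longleftrightarrow> simplicial_complex K \<and> (\<forall>F\<in>K. card F \<le> d + 1) \<and> is_chain K d z \<and>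
     (\<exists>F. z F \<noteq> 0) \<and> (\<forall>G. bdry K z G = 0) \<and> (\<forall>F. missing_face K F \<longrightarrow> card F \<le> i + 1)"

lemma top_cycle_complex: "top_cycle i d K z \<Longrightarrow> simplicial_complex K"
  unfolding top_cycle_def by blast

lemma top_cycle_dim: "top_cycle i d K z \<Longrightarrow> F \<in> K \<Longrightarrow> card F \<le> d + 1"
  unfolding top_cycle_def by blast

lemma top_cycle_facet: "top_cycle i d K z \<Longrightarrow> z F \<noteq> 0 \<Longrightarrow> F \<in> K \<and> card F = d + 1"
  unfolding top_cycle_def is_chain_def by blast

lemma top_cycle_nonzero: "top_cycle i d K z \<Longrightarrow> \<exists>F. z F \<noteq> 0"
  unfolding top_cycle_def by blast

lemma top_cycle_boundary: "top_cycle i d K z \<Longrightarrow> bdry K z G = 0"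
  unfolding top_cycle_def by blast

lemma top_cycle_missing: "top_cycle i d K z \<Longrightarrow> missing_face K F \<Longrightarrow> card F \<le> i + 1"
  unfolding top_cycle_def by blast

lemma top_cycle_face:
  assumes "top_cycle i d K z" "z F \<noteq> 0" "G \<subseteq> F"
  shows "G \<in> K"
  using assms complex_downward[OF top_cycle_complex] top_cycle_facet by blast

lemma top_cycle_support_finite:
  assumes g: "top_cycle i d K z"
  shows "finite (support z)"
proof -
  have "{F. z F \<noteq> 0} \<subseteq> K" using top_cycle_facet[OF g] by blast
  then have "finite {F. z F \<noteq> 0}" using complex_finite[OF top_cycle_complex[OF g]] finite_subset by blast
  moreover have "finite F" if "z F \<noteq> 0" for F
    using that top_cycle_facet[OF g] complex_face_finite[OF top_cycle_complex[OF g]] by blast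
  ultimately show ?thesis unfolding support_def by blast
qed

lemma top_cycle_link:
  assumes g: "top_cycle i d K z" and F: "z F \<noteq> 0" "s \<subseteq> F" and s: "card s \<le> d"
  shows "top_cycle i (d - card s) (link K s) (link_chain s z)"
proof -
  have K: "simplicial_complex K" using top_cycle_complex[OF g] .
  have sK: "s \<in> K" using top_cycle_face[OF g F] .
  have "card G \<le> d - card s + 1" if "G \<in> link K s" for G
    using link_face_card[OF K complex_face_finite[OF K sK] that] top_cycle_dim[OF g, of "G \<union> s"]
      that s unfolding link_def by simp
  moreover have "link_chain s z (F - s) \<noteq> 0"
    using F unfolding link_chain_nonzero by (auto simp: Un_absorb2)
  moreover have "is_chain (link K s) (d - card s) (link_chain s z)"
    using link_chain_is_chain[OF K _ sK s] g unfolding top_cycle_def by blast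
  ultimately show ?thesis
    unfolding top_cycle_def
    using link_complex[OF K sK] link_chain_cycle[OF K _ sK] top_cycle_boundary[OF g]
      link_missing_face_bound[OF K sK] top_cycle_missing[OF g] by blast
qed

lemma top_cycle_vertex_link:
  assumes g: "top_cycle i d K z" and d: "1 \<le> d" and v: "v \<in> support z"
  shows "top_cycle i (d - 1) (link K {v}) (link_chain {v} z)"
proof -
  obtain F where "z F \<noteq> 0" "v \<in> F" using v unfolding support_iff by blast
  then show ?thesis using top_cycle_link[OF g, of F "{v}"] d by simp
qed

lemma link_support_avoids_nonface:
  assumes g: "top_cycle i d K z" and m: "insert m s \<notin> K"
  shows "support (link_chain s z) \<subseteq> support z - insert m s"
proof
  fix x assume x: "x \<in> support (link_chain s z)"
  then obtain F where F: "z F \<noteq> 0" "s \<subseteq> F" "x \<in> F" unfolding support_link_chain by blast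
  have "x \<noteq> m" using top_cycle_face[OF g F(1), of "insert m s"] F m by blast
  then show "x \<in> support z - insert m s"
    using x support_link_chain_subset by blast
qed

(* A nonzero top cycle is not supported on a single facet: otherwise the boundary at a
   codimension-one face of that facet would be a single nonzero term. *)
lemma support_exceeds_facet:
  assumes g: "top_cycle i d K z" and F: "z F \<noteq> 0"
  obtains m where "m \<in> support z" "m \<notin> F"
proof -
  have FK: "F \<in> K" and cF: "card F = d + 1" using top_cycle_facet[OF g F] by auto
  have fF: "finite F" using complex_face_finite[OF top_cycle_complex[OF g] FK] .
  obtain x where x: "x \<in> F" using cF by fastforce
  define H where "H = F - {x}"
  define A where "A = {G \<in> K. H \<subseteq> G \<and> card (G - H) = 1}"
  define summand where "summand G = (-1::int) ^ card {y \<in> H. y < the_elem (G - H)} * z G" for G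
  have "\<not> support z \<subseteq> F"
  proof
    assume sub: "support z \<subseteq> F"
    have only_F: "z G = 0" if "G \<noteq> F" for G
    proof (rule ccontr)
      assume "z G \<noteq> 0"
      then have "G \<subseteq> F" "card G = d + 1"
        using sub top_cycle_facet[OF g] unfolding support_def by blast+
      then show False using that cF fF card_subset_eq by metis
    qed
    have fA: "finite A" unfolding A_def using complex_finite[OF top_cycle_complex[OF g]] by simp
    have FA: "F \<in> A" unfolding A_def H_def using FK x by (simp add: Diff_Diff_Int Int_absorb1)
    have "bdry K z H = summand F + sum summand (A - {F})"
      unfolding bdry_def A_def[symmetric] summand_def[symmetric] using fA FA by (simp add: sum.remove)
    also have "sum summand (A - {F}) = 0" by (rule sum.neutral) (auto simp: summand_def only_F)
    finally have "bdry K z H = summand F" by simp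
    then show False using F top_cycle_boundary[OF g] unfolding summand_def by simp
  qed
  then show ?thesis using that by blast
qed

(* A support vertex m outside a facet F closes a missing face with at most i vertices of F:
   insert m F is too large to be a face, and a missing face inside it must contain m. *)
lemma outside_vertex_missing_face:
  assumes g: "top_cycle i d K z" and F: "z F \<noteq> 0" and m: "m \<in> support z" "m \<notin> F"
  obtains s where "s \<subseteq> F" "s \<noteq> {}" "card s \<le> i" "insert m s \<notin> K"
proof -
  have K: "simplicial_complex K" using top_cycle_complex[OF g] .
  have FK: "F \<in> K" and cF: "card F = d + 1" using top_cycle_facet[OF g F] by auto
  have fF: "finite F" using complex_face_finite[OF K FK] .
  have "insert m F \<notin> K" using top_cycle_dim[OF g, of "insert m F"] cF fF m(2) by auto
  then obtain N where N: "N \<subseteq> insert m F" "missing_face K N"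
    using nonface_contains_missing_face[of "insert m F" K] fF by blast
  have NK: "N \<notin> K" and fN: "finite N" using N(2) unfolding missing_face_def by auto
  have mN: "m \<in> N" using N(1) NK complex_downward[OF K FK] by blast
  define s where "s = N - {m}"
  have "s \<subseteq> F" using N(1) unfolding s_def by blast
  moreover have "insert m s \<notin> K" using mN NK unfolding s_def by (simp add: insert_absorb)
  moreover have "card s \<le> i" using top_cycle_missing[OF g N(2)] fN mN unfolding s_def by simp
  moreover have "s \<noteq> {}"
  proof
    assume "s = {}"
    then have "N = {m}" using mN unfolding s_def by blast
    then show False using NK m(1) top_cycle_face[OF g] unfolding support_iff by blast
  qed
  ultimately show ?thesis using that by blast
qed

section \<open>The vertex bound\<close>

(* n(i,d) = d + d div i + 2 is the number of vertices of S(i,d): d div i blocks of i + 1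
   vertices and one block of d mod i + 2 vertices. *)
definition vertex_bound :: "nat \<Rightarrow> nat \<Rightarrow> nat" where
  "vertex_bound i d = d + d div i + 2"

lemma vertex_bound_decomp: "vertex_bound i d = d div i * (i + 1) + (d mod i + 2)"
proof -
  have "d div i * (i + 1) = d div i * i + d div i" by (simp add: algebra_simps)
  then show ?thesis unfolding vertex_bound_def using div_mult_mod_eq[of d i] by linarith
qed

lemma div_mod_decomp: "c < i \<Longrightarrow> (q * i + c) div i = q \<and> (q * i + c) mod (i::nat) = c"
  by simp

lemma vertex_bound_within_block:
  assumes i: "0 < i" and k: "k \<le> d mod i"
  shows "(d - k) mod i = d mod i - k" and "vertex_bound i (d - k) = vertex_bound i d - k"
proof -
  have "d - k = d div i * i + (d mod i - k)" using k by (metis add_diff_assoc div_mult_mod_eq)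
  moreover have "d mod i - k < i" using i by (meson le_less_trans diff_le_self mod_less_divisor)
  ultimately have dm: "(d - k) div i = d div i" "(d - k) mod i = d mod i - k"
    using div_mod_decomp by metis+
  then show "(d - k) mod i = d mod i - k" by simp
  show "vertex_bound i (d - k) = vertex_bound i d - k"
    unfolding vertex_bound_def dm using k mod_less_eq_dividend[of d i] by linarith
qed

lemma vertex_bound_across_block:
  assumes i: "0 < i" and d: "d mod i < d"
  shows "(d - (d mod i + 1)) mod i = i - 1"
    and "vertex_bound i (d - (d mod i + 1)) = vertex_bound i d - (d mod i + 1) - 1"
proof -
  have e: "d = d div i * i + d mod i" by simp
  then obtain q' where q': "d div i = Suc q'" using d by (cases "d div i") auto
  have "d - (d mod i + 1) = q' * i + (i - 1)" using e i unfolding q' by simp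
  then have dm: "(d - (d mod i + 1)) div i = d div i - 1" "(d - (d mod i + 1)) mod i = i - 1"
    using div_mod_decomp[of "i - 1" i q'] i unfolding q' by simp_all
  then show "(d - (d mod i + 1)) mod i = i - 1" by simp
  show "vertex_bound i (d - (d mod i + 1)) = vertex_bound i d - (d mod i + 1) - 1"
    unfolding vertex_bound_def dm q' using e d by simp
qed

lemma div_decrease:
  assumes "0 < (i::nat)" "k \<le> i"
  shows "d div i \<le> (d - k) div i + 1"
proof -
  have "d div i \<le> ((d - k) + i) div i" using assms by (intro div_le_mono) simp
  also have "\<dots> = (d - k) div i + 1" using assms(1) by (simp add: div_add_self2)
  finally show ?thesis .
qed

(* Induction on d: a support
   vertex m outside a facet F yields a nonempty s \<subseteq> F with |s| \<le> i and s \<union> {m} missing;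
   the link of s has dimension d - |s| and its support misses s \<union> {m}. *)
lemma support_lower_bound:
  assumes i: "0 < i" and g: "top_cycle i d K z"
  shows "vertex_bound i d \<le> card (support z)"
  using g
proof (induction d arbitrary: K z rule: less_induct)
  case (less d K z)
  note g = less.prems
  have fin: "finite (support z)" using top_cycle_support_finite[OF g] .
  obtain F where F: "z F \<noteq> 0" using top_cycle_nonzero[OF g] by blast
  have cF: "card F = d + 1" and FK: "F \<in> K" using top_cycle_facet[OF g F] by simp_all
  have fF: "finite F" using complex_face_finite[OF top_cycle_complex[OF g] FK] .
  have FS: "F \<subseteq> support z" unfolding support_def using F by blast
  obtain m where m: "m \<in> support z" "m \<notin> F" using support_exceeds_facet[OF g F] by blast
  obtain s where s: "s \<subseteq> F" "s \<noteq> {}" "card s \<le> i" "insert m s \<notin> K"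
    using outside_vertex_missing_face[OF g F m] by blast
  have fs: "finite s" using s(1) fF finite_subset by blast
  have ms: "m \<notin> s" using m(2) s(1) by blast
  show ?case
  proof (cases "card s \<le> d")
    case False
    then have "d < i" using s(3) card_mono[OF fF s(1)] cF by simp
    then have "vertex_bound i d = card (insert m F)" unfolding vertex_bound_def using cF fF m(2) by simp
    also have "\<dots> \<le> card (support z)" using FS m(1) fin by (intro card_mono) auto
    finally show ?thesis .
  next
    case True
    have "0 < card s" using s(2) fs by (simp add: card_gt_0_iff)
    then have "d - card s < d" using True by linarith
    then have "vertex_bound i (d - card s) \<le> card (support (link_chain s z))"
      using less.IH top_cycle_link[OF g F s(1) True] by blast
    also have "\<dots> \<le> card (support z - insert m s)"
      using link_support_avoids_nonface[OF g s(4)] fin by (intro card_mono) auto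
    also have "\<dots> = card (support z) - card s - 1"
      using FS s(1) m(1) fs fin ms by (subst card_Diff_subset) auto
    finally show ?thesis
      using div_decrease[OF i s(3), of d] True unfolding vertex_bound_def by linarith
  qed
qed

section \<open>Counting faces on the support\<close>

definition faces_in :: "'a set set \<Rightarrow> 'a set \<Rightarrow> nat \<Rightarrow> nat" where
  "faces_in K V k = card {G \<in> K. G \<subseteq> V \<and> card G = k}"

lemma faces_in_le_fvec: "finite K \<Longrightarrow> faces_in K V (j + 1) \<le> fvec K j"
  unfolding faces_in_def fvec_def by (intro card_mono) auto

lemma faces_in_mono: "finite K \<Longrightarrow> V \<subseteq> W \<Longrightarrow> faces_in K V k \<le> faces_in K W k"
  unfolding faces_in_def by (intro card_mono) auto

lemma faces_in_support_vertices:
  assumes g: "top_cycle i d K z"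
  shows "faces_in K (support z) 1 = card (support z)"
proof -
  have "{G \<in> K. G \<subseteq> support z \<and> card G = 1} = (\<lambda>v. {v}) ` support z"
    using top_cycle_face[OF g] by (auto simp: card_1_singleton_iff support_iff)
  then show ?thesis unfolding faces_in_def by (simp add: card_image)
qed

(* Double counting: each (k+1)-face G \<subseteq> V arises from k + 1 pairs (v, G - {v}) with
   G - {v} a k-face of the link of v inside V - {v}. *)
lemma faces_in_double_count:
  assumes K: "simplicial_complex K" and V: "finite V"
  shows "(\<Sum>v\<in>V. faces_in (link K {v}) (V - {v}) k) \<le> (k + 1) * faces_in K V (k + 1)"
proof -
  define A where "A = {G \<in> K. G \<subseteq> V \<and> card G = k + 1}"
  have fA: "finite A" unfolding A_def using complex_finite[OF K] by simp
  have per_vertex: "faces_in (link K {v}) (V - {v}) k \<le> card {G \<in> A. v \<in> G}" if v: "v \<in> V" for v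
  proof -
    define B where "B = {H \<in> link K {v}. H \<subseteq> V - {v} \<and> card H = k}"
    have "insert v ` B \<subseteq> {G \<in> A. v \<in> G}"
    proof
      fix G assume "G \<in> insert v ` B"
      then obtain H where H: "H \<union> {v} \<in> K" "H \<subseteq> V - {v}" "card H = k" "G = insert v H"
        unfolding B_def link_def by auto
      have "finite H" using complex_face_finite[OF K H(1)] by simp
      moreover have "v \<notin> H" using H(2) by blast
      ultimately show "G \<in> {G \<in> A. v \<in> G}" unfolding A_def using H v by auto
    qed
    moreover have "inj_on (insert v) B" unfolding B_def link_def inj_on_def by blast
    ultimately have "card B \<le> card {G \<in> A. v \<in> G}" using fA by (intro card_inj_on_le) auto
    then show ?thesis unfolding faces_in_def B_def .
  qed
  have "(\<Sum>v\<in>V. faces_in (link K {v}) (V - {v}) k) \<le> (\<Sum>v\<in>V. card {G \<in> A. v \<in> G})"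
    using per_vertex by (rule sum_mono)
  also have "\<dots> = (\<Sum>v\<in>V. \<Sum>G\<in>A. if v \<in> G then 1 else 0)"
    using fA by (simp add: sum.inter_filter[symmetric])
  also have "\<dots> = (\<Sum>G\<in>A. \<Sum>v\<in>V. if v \<in> G then 1 else 0)" by (rule sum.swap)
  also have "\<dots> = (\<Sum>G\<in>A. k + 1)"
  proof (rule sum.cong[OF refl])
    fix G assume "G \<in> A"
    then have "{v \<in> V. v \<in> G} = G" "card G = k + 1" unfolding A_def by auto
    then show "(\<Sum>v\<in>V. if v \<in> G then 1 else 0) = k + 1"
      using V by (simp add: sum.inter_filter[symmetric])
  qed
  also have "\<dots> = (k + 1) * faces_in K V (k + 1)" unfolding faces_in_def A_def by simp
  finally show ?thesis .
qed

lemma binomial_absorption: "1 \<le> n \<Longrightarrow> (k + 1) * (n choose (k + 1)) = n * ((n - 1) choose k)"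
  using Suc_times_binomial[of k "n - 1"] by simp

(* (B) For j \<le> d mod i, at least C(n(i,d), j+1) faces with j + 1 vertices lie on the support.
   Induction on j via vertex links (which lie in the same block) and double counting. *)
lemma support_faces_lower_bound:
  assumes i: "0 < i" and g: "top_cycle i d K z" and j: "j \<le> d mod i"
  shows "vertex_bound i d choose (j + 1) \<le> faces_in K (support z) (j + 1)"
  using g j
proof (induction j arbitrary: d K z)
  case 0
  then show ?case using support_lower_bound[OF i] faces_in_support_vertices by fastforce
next
  case (Suc j d K z)
  note g = Suc.prems(1)
  define n where "n = vertex_bound i d"
  have d: "1 \<le> d" using Suc.prems(2) mod_less_eq_dividend[of d i] by linarith
  have shift: "(d - 1) mod i = d mod i - 1" "vertex_bound i (d - 1) = n - 1"
    using vertex_bound_within_block[OF i, of 1 d] Suc.prems(2) unfolding n_def by auto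
  have link_bound: "(n - 1) choose (j + 1) \<le> faces_in (link K {v}) (support z - {v}) (j + 1)"
    if v: "v \<in> support z" for v
  proof -
    have gv: "top_cycle i (d - 1) (link K {v}) (link_chain {v} z)"
      using top_cycle_vertex_link[OF g d v] .
    have "(n - 1) choose (j + 1) \<le> faces_in (link K {v}) (support (link_chain {v} z)) (j + 1)"
      using Suc.IH[OF gv] Suc.prems(2) shift by simp
    also have "\<dots> \<le> faces_in (link K {v}) (support z - {v}) (j + 1)"
      using complex_finite[OF top_cycle_complex[OF gv]] support_link_chain_subset
      by (rule faces_in_mono)
    finally show ?thesis .
  qed
  have "card (support z) * ((n - 1) choose (j + 1))
      \<le> (\<Sum>v\<in>support z. faces_in (link K {v}) (support z - {v}) (j + 1))"
    using sum_mono[OF link_bound] by simp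
  also have "\<dots> \<le> (j + 2) * faces_in K (support z) (j + 2)"
    using faces_in_double_count[OF top_cycle_complex[OF g] top_cycle_support_finite[OF g], of "j + 1"]
    unfolding add.assoc one_add_one .
  finally have "n * ((n - 1) choose (j + 1)) \<le> (j + 2) * faces_in K (support z) (j + 2)"
    using support_lower_bound[OF i g] unfolding n_def by (meson le_trans mult_le_mono1)
  moreover have "(j + 2) * (n choose (j + 2)) = n * ((n - 1) choose (j + 1))"
    using binomial_absorption[of n "j + 1"] unfolding n_def vertex_bound_def by simp
  ultimately have "(j + 2) * (n choose (j + 2)) \<le> (j + 2) * faces_in K (support z) (j + 2)"
    by linarith
  then have "n choose (j + 2) \<le> faces_in K (support z) (j + 2)"
    by (simp only: mult_le_cancel1)
  then show ?case unfolding n_def by simp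
qed

section \<open>Supports of minimal size\<close>

(* If the support has exactly n(i,d) vertices, then any at most d mod i + 1 support vertices
   lie in a common facet of z: the link of a smaller such set loses no further vertex. *)
lemma tight_support_sets_in_facets:
  assumes i: "0 < i" and g: "top_cycle i d K z" and tight: "card (support z) = vertex_bound i d"
    and T: "finite T" "T \<subseteq> support z" "card T \<le> d mod i + 1"
  shows "\<exists>F. z F \<noteq> 0 \<and> T \<subseteq> F"
  using T
proof (induction T rule: finite_induct)
  case empty
  then show ?case using top_cycle_nonzero[OF g] by blast
next
  case (insert x s)
  have fin: "finite (support z)" using top_cycle_support_finite[OF g] .
  have cs: "card s \<le> d mod i" using insert by simp
  obtain F0 where F0: "z F0 \<noteq> 0" "s \<subseteq> F0" using insert by auto
  have sd: "card s \<le> d" using cs mod_less_eq_dividend[of d i] by linarith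
  have "vertex_bound i d - card s \<le> card (support (link_chain s z))"
    using support_lower_bound[OF i top_cycle_link[OF g F0 sd]] vertex_bound_within_block(2)[OF i cs]
    by simp
  moreover have "card (support z - s) = vertex_bound i d - card s"
    using tight insert by (simp add: card_Diff_subset)
  ultimately have "support (link_chain s z) = support z - s"
    using support_link_chain_subset fin by (metis card_seteq finite_Diff)
  then have "x \<in> support (link_chain s z)" using insert by auto
  then show ?case unfolding support_link_chain by blast
qed

lemma tight_link_across_block:
  assumes i: "0 < i" and g: "top_cycle i d K z" and tight: "card (support z) = vertex_bound i d"
    and d: "d mod i < d"
    and t: "t \<subseteq> support z" "card t = d mod i + 1"
    and a: "a \<in> support z" "a \<notin> t" "insert a t \<notin> K"
  shows "top_cycle i (d - card t) (link K t) (link_chain t z)"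
    and "support (link_chain t z) = support z - insert a t"
    and "card (support (link_chain t z)) = vertex_bound i (d - card t)"
proof -
  have fin: "finite (support z)" using top_cycle_support_finite[OF g] .
  have ft: "finite t" using t(1) fin finite_subset by blast
  obtain F0 where F0: "z F0 \<noteq> 0" "t \<subseteq> F0"
    using tight_support_sets_in_facets[OF i g tight ft t(1)] t(2) by auto
  show link: "top_cycle i (d - card t) (link K t) (link_chain t z)"
    using top_cycle_link[OF g F0] t(2) d by simp
  have "card (support z - insert a t) = vertex_bound i (d - card t)"
    using tight vertex_bound_across_block(2)[OF i d] t a ft fin by (simp add: card_Diff_subset)
  then show "support (link_chain t z) = support z - insert a t"
    using support_lower_bound[OF i link] link_support_avoids_nonface[OF g a(3)] fin
    by (metis card_seteq finite_Diff)
  then show "card (support (link_chain t z)) = vertex_bound i (d - card t)"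
    using \<open>card (support z - insert a t) = _\<close> by simp
qed

lemma tight_missing_sets_disjoint:
  assumes i: "0 < i" and g: "top_cycle i d K z" and tight: "card (support z) = vertex_bound i d"
    and d: "d mod i < d"
    and M1: "M1 \<subseteq> support z" "card M1 = d mod i + 2" "M1 \<notin> K"
    and M2: "M2 \<subseteq> support z" "card M2 = d mod i + 2" "M2 \<notin> K"
    and ne: "M1 \<noteq> M2"
  shows "M1 \<inter> M2 = {} \<and> d mod i + 1 = i"
proof -
  have fin: "finite (support z)" using top_cycle_support_finite[OF g] .
  have f1: "finite M1" and f2: "finite M2" using M1(1) M2(1) fin finite_subset by blast+
  obtain a where a: "a \<in> M1" "a \<notin> M2"
    using ne card_subset_eq[OF f2 _ ] M1(2) M2(2) by (metis subsetI)
  define t where "t = M1 - {a}"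
  have M1t: "insert a t = M1" using a(1) unfolding t_def by blast
  have t: "t \<subseteq> support z" "card t = d mod i + 1" "a \<notin> t"
    using M1 a(1) f1 unfolding t_def by auto
  note link = tight_link_across_block[OF i g tight d t(1,2) _ t(3)]
  have link_t: "top_cycle i (d - card t) (link K t) (link_chain t z)"
    and link_supp: "support (link_chain t z) = support z - M1"
    and link_tight: "card (support (link_chain t z)) = vertex_bound i (d - card t)"
    using link M1(1,3) a(1) M1t by auto
  define P where "P = M2 - M1"
  have P: "P \<subseteq> support (link_chain t z)" "finite P" "M2 \<subseteq> P \<union> t"
    using link_supp M2(1) f2 a unfolding P_def t_def by auto
  have "\<not> card P \<le> i"
  proof
    assume "card P \<le> i"
    moreover have "(d - card t) mod i = i - 1" using vertex_bound_across_block(1)[OF i d] t(2) by simp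
    ultimately obtain F where "link_chain t z F \<noteq> 0" "P \<subseteq> F"
      using tight_support_sets_in_facets[OF i link_t link_tight P(2,1)] i by auto
    then have "P \<union> t \<in> K" using top_cycle_face[OF link_t] unfolding link_def by blast
    then show False using M2(3) P(3) complex_downward[OF top_cycle_complex[OF g]] by blast
  qed
  moreover have "card P \<le> card M2" using f2 unfolding P_def by (simp add: card_mono)
  moreover have "d mod i + 1 \<le> i" using i by (simp add: Suc_leI)
  ultimately have "card P = card M2" "d mod i + 1 = i" using M2(2) by auto
  then have "P = M2" using card_subset_eq[OF f2] unfolding P_def by blast
  then show ?thesis using \<open>d mod i + 1 = i\<close> unfolding P_def by blast
qed

(* The number of blocks of S(i,d) having d mod i + 2 vertices. *)
definition block_count :: "nat \<Rightarrow> nat \<Rightarrow> nat" where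
  "block_count i d = (if d mod i + 1 = i then d div i + 1 else 1)"

lemma vertex_bound_full_blocks:
  assumes "d mod i + 1 = i"
  shows "vertex_bound i d = (d div i + 1) * (d mod i + 2)"
proof -
  have d: "d + 1 = d div i * i + i" using div_mult_mod_eq[of d i] assms by linarith
  have "(d div i + 1) * (i + 1) = d div i * i + d div i + i + 1" by (simp add: algebra_simps)
  moreover have "d mod i + 2 = i + 1" using assms by simp
  ultimately show ?thesis unfolding vertex_bound_def using d by simp
qed

lemma tight_missing_sets_count:
  assumes i: "0 < i" and g: "top_cycle i d K z" and tight: "card (support z) = vertex_bound i d"
    and d: "d mod i < d"
  shows "card {G. G \<subseteq> support z \<and> card G = d mod i + 2 \<and> G \<notin> K} \<le> block_count i d"
proof -
  define k where "k = d mod i + 2"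
  define X where "X = {G. G \<subseteq> support z \<and> card G = k \<and> G \<notin> K}"
  have fin: "finite (support z)" using top_cycle_support_finite[OF g] .
  have fX: "finite X" using fin unfolding X_def by simp
  have pair: "M1 \<inter> M2 = {} \<and> d mod i + 1 = i" if "M1 \<in> X" "M2 \<in> X" "M1 \<noteq> M2" for M1 M2
    using tight_missing_sets_disjoint[OF i g tight d, of M1 M2] that unfolding X_def k_def by blast
  have "card X \<le> block_count i d"
  proof (cases "d mod i + 1 = i")
    case False
    then have "card X \<le> 1" using pair fX by (auto simp: card_le_Suc0_iff_eq)
    then show ?thesis unfolding block_count_def using False by simp
  next
    case True
    have "pairwise disjnt X" using pair unfolding pairwise_def disjnt_def by blast
    moreover have "\<forall>A\<in>X. finite A" using fin unfolding X_def by (auto intro: finite_subset)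
    ultimately have "card (\<Union>X) = sum card X" using card_Union_disjoint by blast
    also have "\<dots> = card X * k" unfolding X_def by simp
    finally have "card X * k = card (\<Union>X)" by simp
    also have "\<dots> \<le> card (support z)" using fin by (intro card_mono) (auto simp: X_def)
    also have "\<dots> = (d div i + 1) * k"
      using tight vertex_bound_full_blocks[OF True] unfolding k_def by simp
    finally have "card X * k \<le> (d div i + 1) * k" .
    then have "card X \<le> d div i + 1" unfolding k_def by (simp only: mult_le_cancel2)
    then show ?thesis unfolding block_count_def using True by simp
  qed
  then show ?thesis unfolding X_def k_def .
qed

lemma tight_missing_count:
  assumes i: "0 < i" and g: "top_cycle i d K z" and tight: "card (support z) = vertex_bound i d"
    and d: "d mod i < d"
  shows "vertex_bound i d choose (d mod i + 2)
    \<le> faces_in K (support z) (d mod i + 2) + block_count i d"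
proof -
  define k where "k = d mod i + 2"
  define X where "X = {G. G \<subseteq> support z \<and> card G = k \<and> G \<notin> K}"
  have fin: "finite (support z)" using top_cycle_support_finite[OF g] .
  have split: "{G. G \<subseteq> support z \<and> card G = k}
      = {G \<in> K. G \<subseteq> support z \<and> card G = k} \<union> X"
    unfolding X_def by blast
  have "vertex_bound i d choose k = card {G. G \<subseteq> support z \<and> card G = k}"
    using n_subsets[OF fin, of k] tight by simp
  also have "\<dots> = faces_in K (support z) k + card X"
    unfolding split faces_in_def using fin by (subst card_Un_disjoint) (auto simp: X_def)
  finally show ?thesis
    using tight_missing_sets_count[OF i g tight d] unfolding X_def k_def by simp
qed

lemma self_le_binomial:
  assumes "1 \<le> r" "r < a"
  shows "a \<le> a choose r"
proof -
  have "r + 1 + k \<le> (r + 1 + k) choose r" for k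
  proof (induction k)
    case 0 show ?case using assms(1) by (cases r) (auto simp: binomial_Suc_n)
  next
    case (Suc k)
    have "(r + 1 + Suc k) choose r = ((r + 1 + k) choose r) + ((r + 1 + k) choose (r - 1))"
      using assms(1) by (cases r) (simp_all add: binomial_Suc_Suc)
    moreover have "1 \<le> (r + 1 + k) choose (r - 1)" by (simp add: Suc_leI)
    ultimately show ?case using Suc.IH by simp
  qed
  from this[of "a - r - 1"] show ?thesis using assms by simp
qed

(* If there are N \<ge> n + 1 support vertices and each vertex link misses at most one of its
   C(n-1, k) possible k-faces, double counting leaves at most m missing (k+1)-sets. *)
lemma counting_slack:
  fixes n N k G C m :: nat
  assumes N: "n + 1 \<le> N" and count: "N * C \<le> (k + 1) * G + N"
    and C: "n - 1 \<le> C" "(k + 1) * (n choose (k + 1)) = n * C"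
    and n: "2 \<le> n" and km: "1 \<le> k" "1 \<le> m"
  shows "n choose (k + 1) \<le> G + m"
proof -
  obtain c where c: "C = Suc c" using C(1) n by (cases C) auto
  have "N * c \<le> (k + 1) * G" using count unfolding c by simp
  moreover have "(n + 1) * c \<le> N * c" using N by (rule mult_le_mono1)
  ultimately have "n * C \<le> (k + 1) * G + 2" using C(1) unfolding c by (simp add: algebra_simps)
  also have "\<dots> \<le> (k + 1) * (G + m)" using km mult_le_mono[of 2 "k + 1" 1 m] by (simp add: algebra_simps)
  finally have "(k + 1) * (n choose (k + 1)) \<le> (k + 1) * (G + m)" using C(2) by simp
  then show ?thesis by (simp only: mult_le_cancel1)
qed

(* In the link of a vertex at most one set of d mod i + 1 vertices is missing: for d mod i = 0
   this is the vertex bound of the link, otherwise the bound (C) one dimension lower, where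
   the block count is 1. *)
lemma vertex_link_missing_bound:
  assumes i: "0 < i" and d: "d mod i < d" and gv: "top_cycle i (d - 1) L w"
    and previous: "(d - 1) mod i < d - 1 \<Longrightarrow> vertex_bound i (d - 1) choose ((d - 1) mod i + 2)
                     \<le> faces_in L (support w) ((d - 1) mod i + 2) + block_count i (d - 1)"
  shows "(vertex_bound i d - 1) choose (d mod i + 1) \<le> faces_in L (support w) (d mod i + 1) + 1"
proof (cases "d mod i = 0")
  case True
  then have "vertex_bound i (d - 1) = vertex_bound i d - 2"
    using vertex_bound_across_block(2)[OF i d] by simp
  moreover have "2 \<le> vertex_bound i d" unfolding vertex_bound_def by simp
  ultimately show ?thesis
    using True support_lower_bound[OF i gv] faces_in_support_vertices[OF gv] by simp
next
  case False
  then have "1 \<le> d mod i" by simp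
  note shift = vertex_bound_within_block[OF i this]
  have "(d - 1) mod i < d - 1" "(d - 1) mod i + 2 = d mod i + 1" "block_count i (d - 1) = 1"
    using shift(1) d False mod_less_divisor[OF i, of d] unfolding block_count_def by simp_all
  then show ?thesis using previous shift(2) by simp
qed

(* (C) For d mod i < d, at most block_count i d of the sets of d mod i + 2 vertices are
   missing: either the support is tight, or double counting over vertex links gives slack. *)
lemma missing_count_bound:
  assumes i: "0 < i" and g: "top_cycle i d K z" and d: "d mod i < d"
  shows "vertex_bound i d choose (d mod i + 2)
    \<le> faces_in K (support z) (d mod i + 2) + block_count i d"
  using g d
proof (induction d arbitrary: K z rule: less_induct)
  case (less d K z)
  note g = less.prems(1) and d = less.prems(2)
  define n where "n = vertex_bound i d"
  define k where "k = d mod i + 1"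
  define N where "N = card (support z)"
  have nN: "n \<le> N" using support_lower_bound[OF i g] unfolding n_def N_def .
  show ?case
  proof (cases "N = n")
    case True
    then show ?thesis using tight_missing_count[OF i g _ d] unfolding N_def n_def by simp
  next
    case False
    have d1: "1 \<le> d" using d by simp
    have link_bound: "(n - 1) choose k \<le> faces_in (link K {v}) (support z - {v}) k + 1"
      if v: "v \<in> support z" for v
    proof -
      have gv: "top_cycle i (d - 1) (link K {v}) (link_chain {v} z)"
        using top_cycle_vertex_link[OF g d1 v] .
      have "(n - 1) choose k \<le> faces_in (link K {v}) (support (link_chain {v} z)) k + 1"
        using vertex_link_missing_bound[OF i d gv] less.IH[of "d - 1", OF _ gv] d1
        unfolding n_def k_def by simp
      also have "\<dots> \<le> faces_in (link K {v}) (support z - {v}) k + 1"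
        using faces_in_mono[OF complex_finite[OF top_cycle_complex[OF gv]] support_link_chain_subset]
        by simp
      finally show ?thesis .
    qed
    have "N * ((n - 1) choose k) \<le> (\<Sum>v\<in>support z. faces_in (link K {v}) (support z - {v}) k + 1)"
      using sum_mono[OF link_bound] unfolding N_def by simp
    also have "\<dots> = (\<Sum>v\<in>support z. faces_in (link K {v}) (support z - {v}) k) + N"
      unfolding N_def by (subst sum.distrib) simp
    also have "\<dots> \<le> (k + 1) * faces_in K (support z) (k + 1) + N"
      using faces_in_double_count[OF top_cycle_complex[OF g] top_cycle_support_finite[OF g], of k]
      by simp
    finally have count: "N * ((n - 1) choose k) \<le> (k + 1) * faces_in K (support z) (k + 1) + N" .
    have "n - 1 \<le> (n - 1) choose k"
      using self_le_binomial[of k "n - 1"] d unfolding k_def n_def vertex_bound_def by simp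
    moreover have "(k + 1) * (n choose (k + 1)) = n * ((n - 1) choose k)"
      using binomial_absorption[of n k] unfolding n_def vertex_bound_def by simp
    moreover have "n + 1 \<le> N" "2 \<le> n" "1 \<le> k" "1 \<le> block_count i d"
      using nN False unfolding n_def vertex_bound_def k_def block_count_def by simp_all
    ultimately have "n choose (k + 1) \<le> faces_in K (support z) (k + 1) + block_count i d"
      using counting_slack[OF _ count] by blast
    then show ?thesis unfolding n_def k_def by (simp add: add.assoc)
  qed
qed

section \<open>The comparison complex S(i,d)\<close>

lemma join_faces_subset:
  "F \<in> foldr (\<lambda>V K. sjoin (bd_simplex V) K) L {{}} \<Longrightarrow> F \<subseteq> \<Union>(set L)"
proof (induction L arbitrary: F)
  case Nil
  then show ?case by simp
next
  case (Cons V L)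
  then show ?case unfolding sjoin_def bd_simplex_def by fastforce
qed

lemma join_faces_contain_no_block:
  assumes "sorted_wrt disjnt L" "F \<in> foldr (\<lambda>V K. sjoin (bd_simplex V) K) L {{}}" "B \<in> set L"
  shows "\<not> B \<subseteq> F"
  using assms
proof (induction L arbitrary: F)
  case Nil
  then show ?case by simp
next
  case (Cons V L)
  obtain F1 G where FG: "F = F1 \<union> G" "F1 \<subseteq> V" "F1 \<noteq> V"
      "G \<in> foldr (\<lambda>V K. sjoin (bd_simplex V) K) L {{}}"
    using Cons.prems(2) unfolding sjoin_def bd_simplex_def by auto
  have G: "G \<subseteq> \<Union>(set L)" using join_faces_subset[OF FG(4)] .
  have disj: "\<forall>W\<in>set L. disjnt V W" "sorted_wrt disjnt L" using Cons.prems(1) by auto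
  show ?case
  proof (cases "B = V")
    case True
    then show ?thesis using FG(1-3) G disj(1) unfolding disjnt_def by blast
  next
    case False
    then have "B \<in> set L" using Cons.prems(3) by simp
    then show ?thesis
      using Cons.IH[OF disj(2) FG(4)] FG(1,2) disj(1) unfolding disjnt_def by blast
  qed
qed

definition full_block :: "nat \<Rightarrow> nat \<Rightarrow> nat set" where
  "full_block i m = {m * (i + 1) ..< (m + 1) * (i + 1)}"

definition last_block :: "nat \<Rightarrow> nat \<Rightarrow> nat set" where
  "last_block i d = {d div i * (i + 1) ..< vertex_bound i d}"

lemma last_block_card: "card (last_block i d) = d mod i + 2"
  unfolding last_block_def vertex_bound_decomp by (simp only: card_atLeastLessThan diff_add_inverse)

lemma S_blocks_eq: "S_blocks i d = map (full_block i) [0..<d div i] @ [last_block i d]"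
  unfolding S_blocks_def full_block_def last_block_def vertex_bound_def Let_def
  by (simp add: algebra_simps)

lemma full_block_bounds: "x \<in> full_block i m \<Longrightarrow> m * (i + 1) \<le> x \<and> x < (m + 1) * (i + 1)"
  unfolding full_block_def by simp

lemma S_blocks_disjoint: "sorted_wrt disjnt (S_blocks i d)"
proof -
  have full: "disjnt (full_block i a) (full_block i b)" if "a < b" for a b
  proof -
    have "(a + 1) * (i + 1) \<le> b * (i + 1)" using that by (intro mult_le_mono1) simp
    then have "x \<notin> full_block i b" if "x \<in> full_block i a" for x
      using full_block_bounds[OF that] full_block_bounds[of x i b] by linarith
    then show ?thesis unfolding disjnt_def by blast
  qed
  have last: "disjnt (full_block i m) (last_block i d)" if "m < d div i" for m
  proof -
    have "(m + 1) * (i + 1) \<le> d div i * (i + 1)" using that by (intro mult_le_mono1) simp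
    then have "x \<notin> last_block i d" if "x \<in> full_block i m" for x
      using full_block_bounds[OF that] unfolding last_block_def by simp
    then show ?thesis unfolding disjnt_def by blast
  qed
  have "sorted_wrt (\<lambda>a b. disjnt (full_block i a) (full_block i b)) [0..<d div i]"
    by (rule sorted_wrt_mono_rel[OF _ sorted_wrt_upt]) (simp add: full)
  then have "sorted_wrt disjnt (map (full_block i) [0..<d div i])" by (simp add: sorted_wrt_map)
  moreover have "\<forall>B\<in>set (map (full_block i) [0..<d div i]). disjnt B (last_block i d)"
    using last by auto
  ultimately show ?thesis unfolding S_blocks_eq sorted_wrt_append by simp
qed

lemma S_blocks_range: "B \<in> set (S_blocks i d) \<Longrightarrow> B \<subseteq> {0..<vertex_bound i d}"
proof -
  assume B: "B \<in> set (S_blocks i d)"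
  have q: "d div i * (i + 1) \<le> vertex_bound i d"
    unfolding vertex_bound_decomp by (rule le_add1)
  show ?thesis
  proof (cases "B = last_block i d")
    case True
    then show ?thesis unfolding last_block_def by auto
  next
    case False
    then have "B \<in> full_block i ` {0..<d div i}" using B unfolding S_blocks_eq by auto
    then obtain m where m: "m < d div i" "B = full_block i m" by auto
    have "(m + 1) * (i + 1) \<le> d div i * (i + 1)" using m(1) by (intro mult_le_mono1) simp
    then show ?thesis using q m(2) full_block_bounds by fastforce
  qed
qed

lemma S_faces:
  assumes "F \<in> S_complex i d"
  shows "F \<subseteq> {0..<vertex_bound i d}" "\<And>B. B \<in> set (S_blocks i d) \<Longrightarrow> \<not> B \<subseteq> F"
proof -
  have F: "F \<in> foldr (\<lambda>V K. sjoin (bd_simplex V) K) (S_blocks i d) {{}}"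
    using assms unfolding S_complex_def .
  show "F \<subseteq> {0..<vertex_bound i d}" using join_faces_subset[OF F] S_blocks_range by blast
  show "\<not> B \<subseteq> F" if "B \<in> set (S_blocks i d)" for B
    using join_faces_contain_no_block[OF S_blocks_disjoint F that] .
qed

lemma S_fvec_upper: "fvec (S_complex i d) j \<le> vertex_bound i d choose (j + 1)"
proof -
  have "fvec (S_complex i d) j \<le> card {G. G \<subseteq> {0..<vertex_bound i d} \<and> card G = j + 1}"
    unfolding fvec_def using S_faces(1) by (intro card_mono) auto
  then show ?thesis using n_subsets[of "{0..<vertex_bound i d}" "j + 1"] by simp
qed

lemma full_block_inj: "inj_on (full_block i) A"
proof (rule inj_onI)
  fix a b assume "full_block i a = full_block i b"
  then have "a * (i + 1) \<in> full_block i b" "b * (i + 1) \<in> full_block i a"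
    unfolding full_block_def by auto
  then have "a * (i + 1) < (b + 1) * (i + 1)" "b * (i + 1) < (a + 1) * (i + 1)"
    using full_block_bounds by blast+
  then show "a = b" by (simp only: mult_less_cancel2) simp
qed

lemma last_block_not_full:
  assumes "m < d div i"
  shows "last_block i d \<noteq> full_block i m"
proof
  assume eq: "last_block i d = full_block i m"
  have "d div i * (i + 1) \<in> last_block i d"
    unfolding last_block_def vertex_bound_decomp by (simp only: atLeastLessThan_iff) linarith
  then have "d div i * (i + 1) < (m + 1) * (i + 1)" using eq full_block_bounds by metis
  then show False using assms by (simp only: mult_less_cancel2) simp
qed

lemma S_blocks_of_top_size:
  assumes i: "0 < i"
  shows "block_count i d \<le> card {B \<in> set (S_blocks i d). card B = d mod i + 2}"
proof -
  define Bs where "Bs = {B \<in> set (S_blocks i d). card B = d mod i + 2}"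
  have last: "last_block i d \<in> Bs" unfolding Bs_def S_blocks_eq using last_block_card by simp
  have fin: "finite Bs" unfolding Bs_def by simp
  show ?thesis
  proof (cases "d mod i + 1 = i")
    case False
    have "1 \<le> card Bs" using last fin by (metis One_nat_def Suc_leI card_gt_0_iff empty_iff)
    then show ?thesis using False unfolding block_count_def Bs_def by simp
  next
    case True
    have "card (full_block i m) = d mod i + 2" for m
      unfolding full_block_def using True by simp
    then have "Bs = insert (last_block i d) (full_block i ` {0..<d div i})"
      using last unfolding Bs_def S_blocks_eq by auto
    moreover have "last_block i d \<notin> full_block i ` {0..<d div i}"
      using last_block_not_full by fastforce
    ultimately have "card Bs = d div i + 1" using fin full_block_inj by (simp add: card_image)
    then show ?thesis unfolding block_count_def Bs_def using True by simp
  qed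
qed

lemma S_fvec_top_upper:
  assumes i: "0 < i"
  shows "fvec (S_complex i d) (d mod i + 1) + block_count i d \<le> vertex_bound i d choose (d mod i + 2)"
proof -
  define U where "U = {0..<vertex_bound i d}"
  define k where "k = d mod i + 2"
  define Bs where "Bs = {B \<in> set (S_blocks i d). card B = k}"
  have fU: "finite U" unfolding U_def by simp
  have BsU: "Bs \<subseteq> {G. G \<subseteq> U \<and> card G = k}"
    unfolding Bs_def U_def using S_blocks_range by blast
  have "{F \<in> S_complex i d. card F = k} \<subseteq> {G. G \<subseteq> U \<and> card G = k} - Bs"
    using S_faces unfolding U_def Bs_def by blast
  then have "fvec (S_complex i d) (d mod i + 1) \<le> card ({G. G \<subseteq> U \<and> card G = k} - Bs)"
    unfolding fvec_def k_def using fU by (intro card_mono) auto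
  also have "\<dots> = (vertex_bound i d choose k) - card Bs"
    using BsU fU n_subsets[OF fU, of k] unfolding U_def
    by (subst card_Diff_subset) (auto intro: finite_subset)
  finally have "fvec (S_complex i d) (d mod i + 1) + card Bs \<le> vertex_bound i d choose k"
    using card_mono[OF _ BsU] n_subsets[OF fU, of k] fU unfolding U_def by simp
  then show ?thesis using S_blocks_of_top_size[OF i, of d] unfolding Bs_def k_def by simp
qed

(* If d < i then S(i,d) is the boundary of a (d+1)-simplex and has no (d+1)-faces. *)
lemma S_no_faces_beyond_dimension:
  assumes "d < i"
  shows "fvec (S_complex i d) (d + 1) = 0"
proof -
  have n: "vertex_bound i d = d + 2" unfolding vertex_bound_def using assms by simp
  have "F \<notin> S_complex i d" if "card F = d + 2" for F
  proof
    assume F: "F \<in> S_complex i d"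
    then have "F = {0..<vertex_bound i d}"
      using S_faces(1) that n by (metis card_atLeastLessThan card_subset_eq diff_zero finite_atLeastLessThan)
    moreover have "last_block i d \<in> set (S_blocks i d)" unfolding S_blocks_eq by simp
    ultimately show False using S_faces(2)[OF F] S_blocks_range by blast
  qed
  then have "{F \<in> S_complex i d. card F = d + 1 + 1} = {}" by auto
  then show ?thesis unfolding fvec_def by (metis card.empty)
qed

(* A complex in C(i,d) carries a top cycle: a non-boundary d-cycle is nonzero. *)
lemma class_C_top_cycle:
  assumes "class_C i d \<Delta>"
  obtains z where "top_cycle i d \<Delta> z"
proof -
  obtain z where z: "is_chain \<Delta> d z" "\<forall>G. bdry \<Delta> z G = 0"
      and not_bdry: "\<not> (\<exists>b. is_chain \<Delta> (d + 1) b \<and> bdry \<Delta> b = z)"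
    using assms unfolding class_C_def reduced_homology_nonzero_def by blast
  have "\<exists>F. z F \<noteq> 0"
  proof (rule ccontr)
    assume "\<not> (\<exists>F. z F \<noteq> 0)"
    then have "bdry \<Delta> (\<lambda>_. 0) = z" unfolding bdry_def by auto
    moreover have "is_chain \<Delta> (d + 1) (\<lambda>_. 0)" unfolding is_chain_def by simp
    ultimately show False using not_bdry by blast
  qed
  then have "top_cycle i d \<Delta> z"
    using assms z unfolding class_C_def complex_dim_def top_cycle_def by blast
  then show ?thesis using that by blast
qed

(* Here d mod i = r - 1.  For j < r use (B); for j = r \<le> d use (C) together with
   the blocks of S(i,d); for j = r = d + 1 the complex S(i,d) has no j-faces. *)
theorem theorem1p1:
  fixes i d q r :: nat and \<Delta> :: "'a::linorder set set"
  assumes "0 < i" and "i \<le> d + 1"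
    and "d + 1 = q * i + r" and "1 \<le> r" and "r \<le> i"
    and "class_C i d \<Delta>"
  shows "\<forall>j. 1 \<le> j \<and> j \<le> r \<longrightarrow> fvec \<Delta> j \<ge> fvec (S_complex i d) j"
proof (intro allI impI)
  fix j assume j: "1 \<le> j \<and> j \<le> r"
  obtain z where g: "top_cycle i d \<Delta> z" using class_C_top_cycle[OF assms(6)] .
  have fin: "finite \<Delta>" using complex_finite[OF top_cycle_complex[OF g]] .
  have "d = q * i + (r - 1)" "r - 1 < i" using assms(3-5) by auto
  then have r: "d mod i = r - 1" using div_mod_decomp by metis
  then have "j < r \<or> (j = d mod i + 1 \<and> d mod i < d) \<or> (j = d + 1 \<and> d < i)"
    using j assms(4) mod_less_divisor[OF assms(1), of d] mod_less_eq_dividend[of d i] by linarith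
  then consider (low) "j < r" | (top) "j = d mod i + 1" "d mod i < d" | (full) "j = d + 1" "d < i"
    by blast
  then show "fvec (S_complex i d) j \<le> fvec \<Delta> j"
  proof cases
    case low
    have "fvec (S_complex i d) j \<le> vertex_bound i d choose (j + 1)" by (rule S_fvec_upper)
    also have "\<dots> \<le> faces_in \<Delta> (support z) (j + 1)"
      using support_faces_lower_bound[OF assms(1) g] low r by simp
    also have "\<dots> \<le> fvec \<Delta> j" using faces_in_le_fvec[OF fin] .
    finally show ?thesis .
  next
    case top
    have "fvec (S_complex i d) j + block_count i d \<le> vertex_bound i d choose (j + 1)"
      using S_fvec_top_upper[OF assms(1)] top by simp
    also have "\<dots> \<le> faces_in \<Delta> (support z) (j + 1) + block_count i d"
      using missing_count_bound[OF assms(1) g top(2)] top by simp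
    finally show ?thesis using faces_in_le_fvec[OF fin, of "support z" j] by simp
  next
    case full
    then show ?thesis using S_no_faces_beyond_dimension by simp
  qed
qed

end
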